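(* Let $\mathcal{M}, \mathcal{L} \in \mathbb{C}^{n\times n}$ and let the matrix pencil $\mathcal{M}-\lambda \mathcal{L}$ have eigenvalues $\lambda_1,\dots,\lambda_k$ satisfying \[ \mathcal{M}v_1 = \lambda_1 \mathcal{L}v_1 ,\ \dots,\ \mathcal{M}v_k = \lambda_k \mathcal{L}v_k \] for some nonzero vectors $v_1,\dots,v_k\in \mathbb{C}^n$. Let $V= [v_1, \dots ,v_k]\in\mathbb{C}^{n\times k}$, $\Lambda=\mathrm{diag}(\lambda_1,\dots,\lambda_k)$ and $\widehat{\Lambda}=\mathrm{diag}(\hat{\lambda}_1,\dots,\hat{\lambda}_k)\in \mathbb{C}^{k\times k}$ for some $\hat{\lambda}_1,\dots,\hat{\lambda}_k \in \mathbb{C}$. If $R_1, R_2\in \mathbb{C}^{n\times k}$ satisfy \[ R_1^{\top}V =\widehat{\Lambda}-\Lambda \quad\text{and}\quad R_2^{\top}V =0, \] then the eigenvalues of the matrix pencil \[ \widehat{\mathcal{M}}-\lambda \widehat{\mathcal{L}} := (\mathcal{M}+\mathcal{L}VR_1^{\top})-\lambda (\mathcal{L}+\mathcal{M}VR_2^{\top}) \] consist of those of $\mathcal{M}-\lambda \mathcal{L}$, except that the eigenvalues $\lambda_1,\dots,\lambda_k$ of $\mathcal{M}-\lambda \mathcal{L}$ are replaced by $\hat{\lambda}_1,\dots,\hat{\lambda}_k$. Moreover, $\hat{\lambda}_1,\dots,\hat{\lambda}_k$ are eigenvalues of $\widehat{\mathcal{M}}-\lambda\widehat{\mathcal{L}}$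 corresponding to the eigenvectors $v_1,\dots,v_k$, respectively, i.e. $\widehat{\mathcal{M}}v_j=\hat{\lambda}_j\widehat{\mathcal{L}}v_j$ for $j=1,\dots,k$.
   Context: For square matrices $\mathcal{M},\mathcal{L}$, a scalar $\mu$ is an eigenvalue of the pencil $\mathcal{M}-\lambda\mathcal{L}$ if $\det(\mathcal{M}-\mu\mathcal{L})=0$, with a corresponding eigenvector being a nonzero $v$ with $\mathcal{M}v=\mu\mathcal{L}v$; eigenvalues are counted with multiplicity as roots of $\det(\mathcal{M}-\lambda\mathcal{L})$. *)

theory Defs
  imports "HOL-Analysis.Analysis" "HOL-Computational_Algebra.Polynomial"
begin

definition pencil_poly :: "complex^'n^'n \<Rightarrow> complex^'n^'n \<Rightarrow> complex poly" where
  "pencil_poly M L = det (\<chi> i j. [: M$i$j, - (L$i$j) :])"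

text \<open>Eigenvalues of the pencil M - x L, counted with multiplicity as roots of det(M - x L)
  (meaningful when this polynomial is nonzero).\<close>
definition pencil_eigs :: "complex^'n^'n \<Rightarrow> complex^'n^'n \<Rightarrow> complex multiset" where
  "pencil_eigs M L = proots (pencil_poly M L)"

end

theory Submission
  imports Defs
begin

text \<open>
  Write \<open>Mh, Lh\<close> for the updated matrices and fix \<open>x\<close> different from every \<open>lam j\<close>.
  Because \<open>M V = L V diag(lam)\<close>, the low-rank update of the pencil is
  \<open>Mh - x Lh = (M - x L) + \<Sum>j. (L v\<^sub>j) w\<^sub>j\<^sup>T\<close> with \<open>w\<^sub>j = r1\<^sub>j - x lam\<^sub>j r2\<^sub>j\<close>, and
  \<open>(M - x L) v\<^sub>j = (lam\<^sub>j - x) L v\<^sub>j\<close>, so \<open>Mh - x Lh = (M - x L) (I + \<Sum>j. a\<^sub>j w\<^sub>j\<^sup>T)\<close> with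
  \<open>a\<^sub>j = v\<^sub>j / (lam\<^sub>j - x)\<close>. The hypotheses on \<open>R1, R2\<close> say exactly that \<open>w\<^sub>i\<^sup>T a\<^sub>j = 0\<close> for \<open>i \<noteq> j\<close>
  and \<open>1 + w\<^sub>j\<^sup>T a\<^sub>j = (lamh\<^sub>j - x) / (lam\<^sub>j - x)\<close>; then \<open>I + \<Sum>j. a\<^sub>j w\<^sub>j\<^sup>T\<close> is the product of the
  rank-one updates \<open>I + a\<^sub>j w\<^sub>j\<^sup>T\<close>, and the matrix determinant lemma gives
  \<open>det (Mh - x Lh) \<Prod>j. (x - lam\<^sub>j) = det (M - x L) \<Prod>j. (x - lamh\<^sub>j)\<close>.
  Both sides are polynomials in \<open>x\<close> that agree at all but finitely many points, hence
  coincide, and comparing their multisets of roots gives the claim on the eigenvalues.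
\<close>

lemma matrix_vector_mult_mat: "mat c *v x = c *s (x::'a::semiring_1^'n)"
  by (simp add: vec_eq_iff matrix_vector_mult_def mat_def if_distrib if_distribR sum.delta cong: if_cong)

lemma mat_matrix_mult: "mat c ** (A::'a::semiring_1^'n^'m) = (\<chi> i j. c * A$i$j)"
  by (simp add: vec_eq_iff matrix_matrix_mult_def mat_def if_distrib if_distribR sum.delta
      cong: if_cong)

lemma column_matrix_mul: "column j (A ** B) = (A::'a::comm_semiring_1^'n^'m) *v column j B"
  by (simp add: vec_eq_iff column_def matrix_matrix_mult_def matrix_vector_mult_def)

lemma sum_matrix_vector_mult:
  "sum f S *v (x::'a::comm_semiring_1^'n) = (\<Sum>i\<in>S. f i *v x)"
  by (induction S rule: infinite_finite_induct) (auto simp: matrix_vector_mult_add_rdistrib)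

lemma matrix_mul_sum_right:
  "(A::'a::comm_semiring_1^'n^'m) ** sum f S = (\<Sum>i\<in>S. A ** f i)"
  by (induction S rule: infinite_finite_induct) (auto simp: matrix_add_ldistrib)

definition outer_prod :: "'a::times^'n \<Rightarrow> 'a^'m \<Rightarrow> 'a^'m^'n" where
  "outer_prod a w = (\<chi> i j. a$i * w$j)"

lemma outer_prod_mult_vec: "outer_prod a w *v (b::'a::comm_semiring_1^'n) = (\<Sum>r\<in>UNIV. w$r * b$r) *s a"
  by (auto simp: vec_eq_iff outer_prod_def matrix_vector_mult_def sum_distrib_left mult_ac)

lemma matrix_mul_outer_prod: "(X::'a::comm_semiring_1^'n^'m) ** outer_prod a w = outer_prod (X *v a) w"
  by (auto simp: vec_eq_iff outer_prod_def matrix_vector_mult_def matrix_matrix_mult_def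
      sum_distrib_left mult_ac)

lemma matrix_mul_transpose_eq_sum_outer_prod:
  "(A::'a::comm_semiring_1^'k^'m) ** transpose B = (\<Sum>j\<in>UNIV. outer_prod (column j A) (column j B))"
  by (simp add: vec_eq_iff outer_prod_def matrix_matrix_mult_def transpose_def column_def sum_component)

lemma det_axis_rows_except:
  fixes w :: "'a::field^'n::finite"
  shows "det (\<chi> r. if r = i then w else axis r 1) = w$i"
proof -
  let ?A = "(\<chi> r. if r = i then (w$i) *s axis i 1 else axis r 1) :: 'a^'n^'n"
  let ?x = "\<Sum>r\<in>UNIV-{i}. w$r *s axis r 1"
  have row_A: "row r ?A = (if r = i then (w$i) *s axis i 1 else axis r 1)" for r
    by (simp add: row_def vec_lambda_eta)
  have "(\<chi> r. if r = i then axis i 1 else axis r 1 :: 'a^'n^'n) = mat 1"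
    by (auto simp: vec_eq_iff mat_def axis_def)
  then have det_A: "det ?A = w$i"
    using det_row_mul[of i "w$i" "\<lambda>r. axis i 1" "\<lambda>r. axis r 1"] by simp
  have span: "?x \<in> vec.span {row j ?A |j. j \<noteq> i}"
    by (intro vec.span_sum vec.span_scale vec.span_base) (auto simp: row_A)
  have "w = (w$i) *s axis i 1 + ?x"
    using basis_expansion[of w] sum.remove[of UNIV i "\<lambda>r. w$r *s axis r 1"] by simp
  then have "(\<chi> r. if r = i then w else axis r 1) = (\<chi> r. if r = i then row i ?A + ?x else row r ?A)"
    unfolding row_A by (simp cong: if_cong)
  then show ?thesis
    by (simp add: det_row_span[OF span] det_A)
qed

lemma det_add_multiples_of_row:
  fixes A :: "'a::comm_ring_1^'n::finite^'n"
  shows "det (\<chi> r. if r = i then A$i else A$r + c r *s A$i) = det A"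
proof -
  have rows: "det (\<chi> r. if r \<in> T then A$r + c r *s A$i else A$r) = det A"
    if "finite T" "i \<notin> T" for T
    using that
  proof (induction T rule: finite_induct)
    case empty
    show ?case by (simp add: vec_lambda_eta)
  next
    case (insert j T)
    let ?B = "(\<chi> r. if r \<in> T then A$r + c r *s A$i else A$r) :: 'a^'n^'n"
    have "(\<chi> r. if r \<in> insert j T then A$r + c r *s A$i else A$r)
        = (\<chi> r. if r = j then row j ?B + c j *s row i ?B else row r ?B)"
      using insert by (auto simp: vec_eq_iff row_def)
    moreover have "j \<noteq> i" using insert by auto
    ultimately show ?case
      using det_row_operation[of j i ?B "c j"] insert by simp
  qed
  have "(\<chi> r. if r = i then A$i else A$r + c r *s A$i)
      = (\<chi> r. if r \<in> -{i} then A$r + c r *s A$i else A$r)"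
    by (simp add: vec_eq_iff)
  then show ?thesis
    using rows[of "-{i}"] by simp
qed

lemma det_mat1_add_outer_prod:
  fixes a w :: "'a::field^'n::finite"
  shows "det (mat 1 + outer_prod a w) = 1 + (\<Sum>r\<in>UNIV. w$r * a$r)"
proof -
  have rows: "det (\<chi> r. if r \<in> T then axis r 1 + a$r *s w else axis r 1 :: 'a^'n^'n)
      = 1 + (\<Sum>r\<in>T. w$r * a$r)" if "finite T" for T
    using that
  proof (induction T rule: finite_induct)
    case empty
    have "(\<chi> r. axis r 1 :: 'a^'n^'n) = mat 1"
      by (auto simp: vec_eq_iff mat_def axis_def)
    then show ?case by simp
  next
    case (insert i T)
    define Q where "Q r = (if r \<in> T then axis r 1 + a$r *s w else axis r 1)" for r
    have "(\<chi> r. if r \<in> insert i T then axis r 1 + a$r *s w else axis r 1)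
        = (\<chi> r. if r = i then axis i 1 + a$i *s w else Q r)"
      by (auto simp: vec_eq_iff Q_def)
    moreover have "(\<chi> r. if r = i then axis i 1 else Q r) = (\<chi> r. Q r)"
      using insert by (auto simp: vec_eq_iff Q_def)
    moreover have "det (\<chi> r. if r = i then w else Q r) = w$i"
    proof -
      have "(\<chi> r. if r = i then w else Q r)
          = (\<chi> r. if r = i then w else axis r 1 + (if r \<in> T then a$r else 0) *s w)"
        by (auto simp: vec_eq_iff Q_def)
      then show ?thesis
        using det_add_multiples_of_row[of i "\<chi> r. if r = i then w else axis r 1"
            "\<lambda>r. if r \<in> T then a$r else 0"]
        by (simp add: det_axis_rows_except cong: if_cong)
    qed
    ultimately show ?case
      using insert det_row_add[of i "\<lambda>_. axis i 1" "\<lambda>_. a$i *s w" Q]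
        det_row_mul[of i "a$i" "\<lambda>_. w" Q]
      by (simp add: Q_def mult.commute)
  qed
  have "mat 1 + outer_prod a w
      = (\<chi> r. if r \<in> UNIV then axis r 1 + a$r *s w else axis r 1 :: 'a^'n^'n)"
    by (auto simp: vec_eq_iff mat_def axis_def outer_prod_def)
  then show ?thesis
    using rows[of UNIV] by simp
qed

lemma det_mat1_add_sum_outer_prod:
  fixes a w :: "'k \<Rightarrow> 'a::field^'n::finite"
  assumes orth: "\<And>i j. i \<noteq> j \<Longrightarrow> (\<Sum>r\<in>UNIV. w i $ r * a j $ r) = 0"
    and "finite S"
  shows "det (mat 1 + (\<Sum>j\<in>S. outer_prod (a j) (w j)))
       = (\<Prod>j\<in>S. 1 + (\<Sum>r\<in>UNIV. w j $ r * a j $ r))"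
  using \<open>finite S\<close>
proof (induction S rule: finite_induct)
  case empty
  then show ?case by simp
next
  case (insert j S)
  let ?P = "mat 1 + (\<Sum>i\<in>S. outer_prod (a i) (w i))"
  have "outer_prod (a i) (w i) *v a j = 0" if "i \<in> S" for i
    using that insert orth[of i j] by (auto simp: outer_prod_mult_vec)
  then have "?P *v a j = a j"
    by (simp add: matrix_vector_mult_add_rdistrib sum_matrix_vector_mult)
  then have "?P ** (mat 1 + outer_prod (a j) (w j)) = ?P + outer_prod (a j) (w j)"
    by (simp only: matrix_add_ldistrib matrix_mul_rid matrix_mul_outer_prod)
  also have "\<dots> = mat 1 + (\<Sum>i\<in>insert j S. outer_prod (a i) (w i))"
    using insert by (simp add: add_ac)
  finally have factor: "?P ** (mat 1 + outer_prod (a j) (w j))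
      = mat 1 + (\<Sum>i\<in>insert j S. outer_prod (a i) (w i))" .
  have "det (mat 1 + (\<Sum>i\<in>insert j S. outer_prod (a i) (w i)))
      = det ?P * det (mat 1 + outer_prod (a j) (w j))"
    by (simp only: det_mul flip: factor)
  then show ?case
    using insert by (simp add: det_mat1_add_outer_prod mult.commute)
qed

lemma det_pencil_low_rank_update:
  fixes M L :: "'a::field^'n::finite^'n"
    and V R1 R2 :: "'a^'k::finite^'n"
    and lam lamh :: "'k \<Rightarrow> 'a"
  assumes eig: "\<And>j. M *v column j V = lam j *s (L *v column j V)"
    and R1: "transpose R1 ** V = (\<chi> i j. if i = j then lamh i - lam i else 0)"
    and R2: "transpose R2 ** V = 0"
    and not_eig: "\<And>j. lam j \<noteq> x"
  shows "det ((M + L ** V ** transpose R1) - mat x ** (L + M ** V ** transpose R2))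
           * (\<Prod>j\<in>UNIV. x - lam j)
       = det (M - mat x ** L) * (\<Prod>j\<in>UNIV. x - lamh j)"
proof -
  define A where "A = M - mat x ** L"
  define a where "a j = (1 / (lam j - x)) *s column j V" for j
  define w where "w j = column j R1 - (x * lam j) *s column j R2" for j
  have Av: "A *v column j V = (lam j - x) *s (L *v column j V)" for j
    using eig[of j] by (simp add: A_def matrix_vector_mult_diff_rdistrib matrix_vector_mult_mat
        scaleR_diff_left flip: matrix_vector_mul_assoc)
  have Aa: "A *v a j = L *v column j V" for j
  proof -
    have "A *v a j = (1 / (lam j - x) * (lam j - x)) *s (L *v column j V)"
      by (simp only: a_def vector_scalar_commute Av vector_smult_assoc)
    then show ?thesis
      using not_eig[of j] by simp
  qed
  have "L ** V ** transpose R1 = (\<Sum>j\<in>UNIV. outer_prod (L *v column j V) (column j R1))"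
    and "M ** V ** transpose R2
      = (\<Sum>j\<in>UNIV. outer_prod (lam j *s (L *v column j V)) (column j R2))"
    by (simp_all add: matrix_mul_transpose_eq_sum_outer_prod column_matrix_mul eig)
  then have "(M + L ** V ** transpose R1) - mat x ** (L + M ** V ** transpose R2)
      = A + (\<Sum>j\<in>UNIV. outer_prod (L *v column j V) (w j))"
    by (simp add: vec_eq_iff A_def w_def mat_matrix_mult outer_prod_def sum_component
        sum_subtractf sum_distrib_left algebra_simps)
  also have "\<dots> = A ** (mat 1 + (\<Sum>j\<in>UNIV. outer_prod (a j) (w j)))"
    by (simp add: matrix_add_ldistrib matrix_mul_sum_right matrix_mul_outer_prod Aa)
  finally have factor: "(M + L ** V ** transpose R1) - mat x ** (L + M ** V ** transpose R2)
      = A ** (mat 1 + (\<Sum>j\<in>UNIV. outer_prod (a j) (w j)))" .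
  have orth: "(\<Sum>r\<in>UNIV. w i $ r * a j $ r) = (if i = j then lamh i - lam i else 0) / (lam j - x)"
    for i j
  proof -
    have "(\<Sum>r\<in>UNIV. w i $ r * V$r$j)
        = (transpose R1 ** V)$i$j - x * lam i * (transpose R2 ** V)$i$j"
      by (simp add: w_def matrix_matrix_mult_def transpose_def column_def sum_subtractf
          sum_distrib_left algebra_simps)
    then show ?thesis
      by (simp add: a_def column_def R1 R2 flip: sum_divide_distrib)
  qed
  have "1 + (\<Sum>r\<in>UNIV. w j $ r * a j $ r) = (x - lamh j) / (x - lam j)" for j
    unfolding orth using not_eig[of j] by (simp add: field_simps)
  then have prod_eq: "(\<Prod>j\<in>UNIV. 1 + (\<Sum>r\<in>UNIV. w j $ r * a j $ r)) * (\<Prod>j\<in>UNIV. x - lam j)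
      = (\<Prod>j\<in>UNIV. x - lamh j)"
    unfolding prod.distrib[symmetric] using not_eig by (intro prod.cong) auto
  have "det (mat 1 + (\<Sum>j\<in>UNIV. outer_prod (a j) (w j)))
      = (\<Prod>j\<in>UNIV. 1 + (\<Sum>r\<in>UNIV. w j $ r * a j $ r))"
    by (rule det_mat1_add_sum_outer_prod) (simp_all add: orth)
  then show ?thesis
    unfolding factor det_mul A_def[symmetric] by (simp add: mult.assoc prod_eq)
qed

lemma pencil_low_rank_update_eigenvector:
  fixes M L :: "'a::field^'n::finite^'n"
    and V R1 R2 :: "'a^'k::finite^'n"
  assumes eig: "M *v column j V = lam j *s (L *v column j V)"
    and R1: "transpose R1 ** V = (\<chi> i j. if i = j then lamh i - lam i else 0)"
    and R2: "transpose R2 ** V = 0"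
  shows "(M + L ** V ** transpose R1) *v column j V
       = lamh j *s ((L + M ** V ** transpose R2) *v column j V)"
proof -
  have R1_col: "V *v (transpose R1 *v column j V) = (lamh j - lam j) *s column j V"
    unfolding column_matrix_mul[symmetric] matrix_mul_assoc[symmetric] R1
    by (simp add: vec_eq_iff column_def matrix_matrix_mult_def if_distrib if_distribR
        sum.delta algebra_simps cong: if_cong)
  have R2_col: "V *v (transpose R2 *v column j V) = 0"
    unfolding column_matrix_mul[symmetric] R2 by (simp add: vec_eq_iff column_def)
  have "(M + L ** V ** transpose R1) *v column j V
      = M *v column j V + L *v (V *v (transpose R1 *v column j V))"
    by (simp only: matrix_vector_mult_add_rdistrib flip: matrix_vector_mul_assoc matrix_mul_assoc)
  also have "\<dots> = lamh j *s (L *v column j V)"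
    by (simp only: eig R1_col vector_scalar_commute flip: vector_sadd_rdistrib) simp
  moreover have "(L + M ** V ** transpose R2) *v column j V = L *v column j V"
    by (simp only: matrix_vector_mult_add_rdistrib R2_col matrix_vector_mult_0_right add_0_right
        flip: matrix_vector_mul_assoc matrix_mul_assoc)
  ultimately show ?thesis
    by simp
qed

lemma poly_pencil_poly: "poly (pencil_poly M L) x = det (M - mat x ** L)"
  unfolding pencil_poly_def det_def by (simp add: poly_sum poly_prod mat_matrix_mult)

lemma poly_eq_if_eq_outside_finite:
  fixes p q :: "'a::{idom,ring_char_0} poly"
  assumes "finite S" and "\<And>x. x \<notin> S \<Longrightarrow> poly p x = poly q x"
  shows "p = q"
proof (rule ccontr)
  assume "p \<noteq> q"
  then have "finite {x. poly (p - q) x = 0}"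
    by (intro poly_roots_finite) simp
  moreover have "- S \<subseteq> {x. poly (p - q) x = 0}"
    using assms(2) by auto
  ultimately have "finite (S \<union> - S)"
    using assms(1) finite_subset by blast
  then show False
    using infinite_UNIV_char_0[where 'a='a] by simp
qed

lemma proots_prod_linear_factors: "proots (\<Prod>j\<in>A. [:- c j, 1:]) = image_mset c (mset_set A)"
  by (simp add: proots_prod sum_unfold_sum_mset)

lemma pencil_poly_low_rank_update:
  fixes M L :: "complex^'n::finite^'n"
    and V R1 R2 :: "complex^'k::finite^'n"
    and lam lamh :: "'k \<Rightarrow> complex"
  assumes eig: "\<And>j. M *v column j V = lam j *s (L *v column j V)"
    and R1: "transpose R1 ** V = (\<chi> i j. if i = j then lamh i - lam i else 0)"
    and R2: "transpose R2 ** V = 0"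
  shows "pencil_poly (M + L ** V ** transpose R1) (L + M ** V ** transpose R2)
           * (\<Prod>j\<in>UNIV. [:- lam j, 1:])
       = pencil_poly M L * (\<Prod>j\<in>UNIV. [:- lamh j, 1:])"
proof (rule poly_eq_if_eq_outside_finite)
  show "finite (range lam)" by simp
  fix x assume "x \<notin> range lam"
  then show "poly (pencil_poly (M + L ** V ** transpose R1) (L + M ** V ** transpose R2)
           * (\<Prod>j\<in>UNIV. [:- lam j, 1:])) x
       = poly (pencil_poly M L * (\<Prod>j\<in>UNIV. [:- lamh j, 1:])) x"
    using det_pencil_low_rank_update[OF eig R1 R2, of x]
    by (auto simp: poly_pencil_poly poly_prod)
qed

theorem theorem6:
  fixes M L :: "complex^'n^'n"
    and V R1 R2 :: "complex^'k^'n"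
    and lam lamh :: "'k \<Rightarrow> complex"
  assumes nz: "\<forall>j. column j V \<noteq> 0"
    and eig: "\<forall>j. M *v column j V = lam j *s (L *v column j V)"
    and R1: "transpose R1 ** V = (\<chi> i j. if i = j then lamh i - lam i else 0)"
    and R2: "transpose R2 ** V = 0"
  shows "(\<forall>j. (M + L ** V ** transpose R1) *v column j V
              = lamh j *s ((L + M ** V ** transpose R2) *v column j V))
    \<and> (pencil_poly M L \<noteq> 0 \<and> image_mset lam (mset_set UNIV) \<subseteq># pencil_eigs M L \<longrightarrow>
         pencil_poly (M + L ** V ** transpose R1) (L + M ** V ** transpose R2) \<noteq> 0 \<and>
         pencil_eigs (M + L ** V ** transpose R1) (L + M ** V ** transpose R2)
           = pencil_eigs M L - image_mset lam (mset_set UNIV) + image_mset lamh (mset_set UNIV))"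
proof (intro conjI allI impI)
  fix j
  show "(M + L ** V ** transpose R1) *v column j V
      = lamh j *s ((L + M ** V ** transpose R2) *v column j V)"
    using eig R1 R2 by (intro pencil_low_rank_update_eigenvector) auto
next
  let ?q = "pencil_poly (M + L ** V ** transpose R1) (L + M ** V ** transpose R2)"
  assume "pencil_poly M L \<noteq> 0 \<and> image_mset lam (mset_set UNIV) \<subseteq># pencil_eigs M L"
  then have p: "pencil_poly M L \<noteq> 0" and sub: "image_mset lam (mset_set UNIV) \<subseteq># pencil_eigs M L"
    by auto
  have eq: "?q * (\<Prod>j\<in>UNIV. [:- lam j, 1:]) = pencil_poly M L * (\<Prod>j\<in>UNIV. [:- lamh j, 1:])"
    using eig R1 R2 by (intro pencil_poly_low_rank_update) auto
  then show q: "?q \<noteq> 0"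
    using p by auto
  have "pencil_eigs (M + L ** V ** transpose R1) (L + M ** V ** transpose R2)
        + image_mset lam (mset_set UNIV)
      = pencil_eigs M L + image_mset lamh (mset_set UNIV)"
    using arg_cong[OF eq, of proots] p q
    by (simp add: pencil_eigs_def proots_mult proots_prod_linear_factors)
  then show "pencil_eigs (M + L ** V ** transpose R1) (L + M ** V ** transpose R2)
      = pencil_eigs M L - image_mset lam (mset_set UNIV) + image_mset lamh (mset_set UNIV)"
    using sub by (metis add_diff_cancel_right' subset_mset.add_diff_assoc2)
qed

end
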